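(* Let $f(x)=x^5+px^4+qx^3+rx^2+sx+t$ with $p,q,r,s,t\in\mathbb{R}$, and let $D$, $L_3$, $L_2$, $L_1$ be as in the context. Then: (1) $f$ has five distinct real roots if and only if $L_3>0$, $L_2>0$, $L_1>0$ and $D>0$; (2) $f$ has three distinct real roots and a pair of (non-real) complex conjugate roots if and only if $D<0$; (3) $f$ has exactly one real root and four distinct non-real roots (two distinct pairs of complex conjugate roots) if and only if $D>0$ and ($L_3\le 0$ or $L_2\le 0$ or $L_1\le 0$).
   Context: Let $\alpha_1,\dots,\alpha_5\in\mathbb{C}$ be the roots of $f$ listed with multiplicity. $D=\prod_{1\le i<j\le 5}(\alpha_i-\alpha_j)^2$ is the discriminant of $f$ (a polynomial in $p,q,r,s,t$). $L_3=2p^2-5q$. $L_2=40qs-16p^2s-8rp^3+38rpq+3p^2q^2-12q^3-45r^2$. $L_1=-264ps^2r-12p^3tq^2+36r^3pq-124srpq^2+28srp^3q+260sptq-132p^2qrt+240pr^2t+234sqr^2+32p^4tr+48ptq^3-56sp^3t-80q^2rt+194qs^2p^2-600str-6q^3sp^2+2p^2q^2r^2-12sr^2p^2-54r^4+320s^3-8q^3r^2-8r^3p^3+250qt^2-176q^2s^2+24q^4s-36p^4s^2-100p^2t^2$. ($L_3,L_2,L_1$ are, up to positive factors, the leading coefficients of the degree 3, 2, 1 remainders in the Sturm sequence of $f$.) *)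

theory Defs
  imports "HOL-Computational_Algebra.Polynomial" Complex_Main
begin

definition quintic :: "real \<Rightarrow> real \<Rightarrow> real \<Rightarrow> real \<Rightarrow> real \<Rightarrow> real poly" where
  "quintic p q r s t = [:t, s, r, q, p, 1:]"

definition root_disc :: "complex list \<Rightarrow> complex" where
  "root_disc xs = (\<Prod>i<length xs. \<Prod>j\<in>{i<..<length xs}. (xs ! i - xs ! j)^2)"

definition quintic_roots :: "real \<Rightarrow> real \<Rightarrow> real \<Rightarrow> real \<Rightarrow> real \<Rightarrow> complex list" where
  "quintic_roots p q r s t = (SOME xs. map_poly complex_of_real (quintic p q r s t)
        = (\<Prod>x\<leftarrow>xs. [:- x, 1:]))"

text \<open>D is real; we take the real part of the (real) complex number.\<close>
definition quintic_disc :: "real \<Rightarrow> real \<Rightarrow> real \<Rightarrow> real \<Rightarrow> real \<Rightarrow> real" where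
  "quintic_disc p q r s t = Re (root_disc (quintic_roots p q r s t))"

definition L3 :: "real \<Rightarrow> real \<Rightarrow> real \<Rightarrow> real \<Rightarrow> real \<Rightarrow> real" where
  "L3 p q r s t = 2*p^2 - 5*q"

definition L2 :: "real \<Rightarrow> real \<Rightarrow> real \<Rightarrow> real \<Rightarrow> real \<Rightarrow> real" where
  "L2 p q r s t = 40*q*s - 16*p^2*s - 8*r*p^3 + 38*r*p*q + 3*p^2*q^2 - 12*q^3 - 45*r^2"

definition L1 :: "real \<Rightarrow> real \<Rightarrow> real \<Rightarrow> real \<Rightarrow> real \<Rightarrow> real" where
  "L1 p q r s t = -264*p*s^2*r - 12*p^3*t*q^2 + 36*r^3*p*q - 124*s*r*p*q^2 + 28*s*r*p^3*q
     + 260*s*p*t*q - 132*p^2*q*r*t + 240*p*r^2*t + 234*s*q*r^2 + 32*p^4*t*r + 48*p*t*q^3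
     - 56*s*p^3*t - 80*q^2*r*t + 194*q*s^2*p^2 - 600*s*t*r - 6*q^3*s*p^2 + 2*p^2*q^2*r^2
     - 12*s*r^2*p^2 - 54*r^4 + 320*s^3 - 8*q^3*r^2 - 8*r^3*p^3 + 250*q*t^2 - 176*q^2*s^2
     + 24*q^4*s - 36*p^4*s^2 - 100*p^2*t^2"

definition real_roots :: "real poly \<Rightarrow> real set" where
  "real_roots f = {x. poly f x = 0}"

definition nonreal_roots :: "real poly \<Rightarrow> complex set" where
  "nonreal_roots f = {z. poly (map_poly complex_of_real f) z = 0 \<and> Im z \<noteq> 0}"

end

theory Submission
  imports Defs "HOL-Computational_Algebra.Fundamental_Theorem_Algebra"
begin

text \<open>
  Over \<open>\<complex>\<close> the quintic splits into linear factors, and its roots are closed under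
  conjugation. If two roots coincide then \<open>D = 0\<close>; otherwise there are three
  configurations: five real roots, three real roots and one conjugate pair, or one real root
  and two conjugate pairs. Grouping conjugate factors in \<open>D = \<Prod>\<^sub>i<\<^sub>j (\<alpha>\<^sub>i - \<alpha>\<^sub>j)\<^sup>2\<close>
  shows that the sign of \<open>D\<close> is \<open>(-1)\<close> to the number of conjugate pairs.

  To separate the first and the last configuration, consider the Hankel matrix
  \<open>H = (s\<^sub>i\<^sub>+\<^sub>j)\<^sub>i\<^sub>,\<^sub>j\<^sub><\<^sub>4\<close> of the power sums \<open>s\<^sub>k = \<Sum> \<alpha>\<^sub>i\<^sup>k\<close>; its quadratic form is
  \<open>c \<mapsto> \<Sum> g(\<alpha>\<^sub>i)\<^sup>2\<close> with \<open>g(y) = \<Sum> c\<^sub>k y\<^sup>k\<close>, and its leading principal minors are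
  \<open>5, 2 L\<^sub>3, L\<^sub>2, L\<^sub>1\<close>. With five distinct real roots the form is positive definite, as a
  nonzero cubic has at most three roots. With a real root \<open>a\<close> and pairs \<open>z, z\<^sup>*, w, w\<^sup>*\<close>
  there is a nonzero real cubic \<open>g\<close> with \<open>g(a) = 0\<close> and \<open>Re g(z) = Re g(w) = 0\<close>, and then
  the form is \<open>-2 (Im g(z))\<^sup>2 - 2 (Im g(w))\<^sup>2 \<le> 0\<close>. Sylvester's criterion, proved through
  Schur complements, turns positive definiteness into positivity of the minors.
\<close>

lemma prod_list_map_mset_eq:
  fixes g :: "'a \<Rightarrow> 'b::comm_monoid_mult"
  assumes "mset ys = mset xs"
  shows "(\<Prod>x\<leftarrow>ys. g x) = (\<Prod>x\<leftarrow>xs. g x)"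
proof -
  have "prod_mset (image_mset g (mset ys)) = prod_mset (image_mset g (mset xs))"
    using assms by simp
  then show ?thesis by (simp only: prod_mset_prod_list flip: mset_map)
qed

lemma degree_prod_linear_factors:
  "degree (\<Prod>x\<leftarrow>xs. [:-x, 1::'a::idom:]) = length xs"
proof (induction xs)
  case (Cons a xs)
  have "(\<Prod>x\<leftarrow>xs. [:-x, 1::'a:]) \<noteq> 0" by (auto simp: prod_list_zero_iff)
  then have "degree ([:-a, 1:] * (\<Prod>x\<leftarrow>xs. [:-x, 1::'a:])) = Suc (length xs)"
    using Cons by (subst degree_mult_eq) auto
  then show ?case by simp
qed simp

lemma poly_prod_linear_factors:
  "poly (\<Prod>x\<leftarrow>xs. [:-x, 1:]) (z::'a::comm_ring_1) = (\<Prod>x\<leftarrow>xs. z - x)"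
  by (induction xs) (simp_all add: algebra_simps)

lemma poly_pderiv_prod_linear_factors_Cons:
  "poly (pderiv (\<Prod>x\<leftarrow>a#xs. [:-x, 1:])) (a::'a::idom) = (\<Prod>x\<leftarrow>xs. a - x)"
  unfolding list.map prod_list.Cons pderiv_mult by (simp add: pderiv_pCons poly_prod_linear_factors)

lemma poly_map_poly_of_real:
  "poly (map_poly of_real p) (of_real x :: 'a::{real_algebra_1,comm_ring_1}) = of_real (poly p x)"
  by (induction p) (auto simp: map_poly_pCons)

definition complex_root_list :: "real poly \<Rightarrow> complex list \<Rightarrow> bool" where
  "complex_root_list f xs \<longleftrightarrow> map_poly complex_of_real f = (\<Prod>x\<leftarrow>xs. [:-x, 1:])"

lemma complex_root_list_exists:
  assumes "lead_coeff f = 1"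
  shows "\<exists>xs. complex_root_list f xs"
proof -
  let ?F = "map_poly complex_of_real f"
  have "lead_coeff ?F = 1"
    using assms by (simp add: degree_map_poly coeff_map_poly)
  then have "?F \<noteq> 0" by auto
  then obtain A where "?F = (\<Prod>x\<in>#A. [:-x, 1:])"
    using alg_closed_imp_factorization[OF \<open>?F \<noteq> 0\<close>] \<open>lead_coeff ?F = 1\<close> by auto
  moreover obtain xs where "mset xs = A" using ex_mset by blast
  moreover have "(\<Prod>x\<in>#mset xs. [:-x, 1:]) = (\<Prod>x\<leftarrow>xs. [:-x, 1::complex:])"
    by (simp only: prod_mset_prod_list flip: mset_map)
  ultimately show ?thesis unfolding complex_root_list_def by auto
qed

lemma complex_root_list_length:
  assumes "complex_root_list f xs"
  shows "length xs = degree f"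
proof -
  have "degree (map_poly complex_of_real f) = degree f" by (simp add: degree_map_poly)
  with assms show ?thesis by (simp add: complex_root_list_def degree_prod_linear_factors)
qed

lemma complex_root_list_mset:
  assumes "complex_root_list f xs" "mset ys = mset xs"
  shows "complex_root_list f ys"
  using assms(1) prod_list_map_mset_eq[OF assms(2), of "\<lambda>x. [:-x, 1:]"]
  unfolding complex_root_list_def by (rule trans[OF _ sym])

lemma complex_root_list_root_iff:
  "complex_root_list f xs \<Longrightarrow> poly (map_poly complex_of_real f) z = 0 \<longleftrightarrow> z \<in> set xs"
  unfolding complex_root_list_def by (auto simp: poly_prod_linear_factors prod_list_zero_iff)

lemma complex_root_list_cnj:
  assumes "complex_root_list f xs" "z \<in> set xs"
  shows "cnj z \<in> set xs"
proof -
  have "poly (map_poly complex_of_real f) (cnj z) = 0 \<longleftrightarrow> poly (map_poly complex_of_real f) z = 0"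
    by (rule real_poly_cnj_root_iff) (simp add: coeff_map_poly)
  with assms show ?thesis by (simp add: complex_root_list_root_iff)
qed

lemma real_roots_iff:
  assumes "complex_root_list f xs"
  shows "x \<in> real_roots f \<longleftrightarrow> complex_of_real x \<in> set xs"
proof -
  have "x \<in> real_roots f \<longleftrightarrow> poly (map_poly complex_of_real f) (of_real x) = 0"
    unfolding real_roots_def poly_map_poly_of_real by simp
  also have "\<dots> \<longleftrightarrow> complex_of_real x \<in> set xs"
    by (rule complex_root_list_root_iff[OF assms])
  finally show ?thesis .
qed

lemma card_real_roots_eq:
  assumes "complex_root_list f xs"
  shows "card (real_roots f) = card {z \<in> set xs. Im z = 0}"
proof -
  have "{z \<in> set xs. Im z = 0} = complex_of_real ` real_roots f"
  proof (intro equalityI subsetI)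
    fix z assume z: "z \<in> {z \<in> set xs. Im z = 0}"
    then have "z = complex_of_real (Re z)" by (simp add: complex_eq_iff)
    with z show "z \<in> complex_of_real ` real_roots f"
      by (metis (mono_tags) image_eqI mem_Collect_eq real_roots_iff[OF assms])
  qed (auto simp: real_roots_iff[OF assms])
  then show ?thesis by (simp add: card_image inj_on_def)
qed

lemma nonreal_roots_eq:
  "complex_root_list f xs \<Longrightarrow> nonreal_roots f = {z \<in> set xs. Im z \<noteq> 0}"
  unfolding nonreal_roots_def by (auto simp: complex_root_list_root_iff)

lemma map_poly_quintic:
  "map_poly complex_of_real (quintic p q r s t) =
     [:of_real t, of_real s, of_real r, of_real q, of_real p, 1:]"
  unfolding quintic_def by (simp add: map_poly_pCons)

lemma complex_root_list_quintic_roots: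
  "complex_root_list (quintic p q r s t) (quintic_roots p q r s t)"
proof -
  have "lead_coeff (quintic p q r s t) = 1" by (simp add: quintic_def)
  then show ?thesis
    unfolding quintic_roots_def complex_root_list_def[symmetric]
    by (rule someI_ex[OF complex_root_list_exists])
qed

lemma quintic_root_list_length:
  "complex_root_list (quintic p q r s t) xs \<Longrightarrow> length xs = 5"
  by (simp add: complex_root_list_length quintic_def)

lemma prod_linear_factors_5:
  fixes a b c d e :: complex
  shows "(\<Prod>x\<leftarrow>[a, b, c, d, e]. [:-x, 1:]) =
    [:-(a*b*c*d*e), a*b*c*d + a*b*c*e + a*b*d*e + a*c*d*e + b*c*d*e,
      -(a*b*c + a*b*d + a*b*e + a*c*d + a*c*e + a*d*e + b*c*d + b*c*e + b*d*e + c*d*e),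
      a*b + a*c + a*d + a*e + b*c + b*d + b*e + c*d + c*e + d*e, -(a+b+c+d+e), 1:]"
  by (simp, intro conjI; algebra)

lemma quintic_vieta:
  assumes "complex_root_list (quintic p q r s t) [a, b, c, d, e]"
  shows "of_real p = -(a+b+c+d+e)"
    and "of_real q = a*b + a*c + a*d + a*e + b*c + b*d + b*e + c*d + c*e + d*e"
    and "of_real r = -(a*b*c + a*b*d + a*b*e + a*c*d + a*c*e + a*d*e + b*c*d + b*c*e + b*d*e + c*d*e)"
    and "of_real s = a*b*c*d + a*b*c*e + a*b*d*e + a*c*d*e + b*c*d*e"
    and "of_real t = -(a*b*c*d*e)"
  using assms by (simp_all only: complex_root_list_def map_poly_quintic prod_linear_factors_5 pCons_eq_iff)

lemma root_disc_5:
  "root_disc [a, b, c, d, e] =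
     (a-b)^2 * (a-c)^2 * (a-d)^2 * (a-e)^2 * (b-c)^2 * (b-d)^2 * (b-e)^2 * (c-d)^2 * (c-e)^2 * (d-e)^2"
proof -
  have "{k<..<Suc n} = (if k < n then insert n {k<..<n} else {})" for k n :: nat by auto
  then show ?thesis
    unfolding root_disc_def by (simp add: lessThan_Suc eval_nat_numeral mult_ac)
qed

text \<open>The classical identity \<open>D = (-1)^(n(n-1)/2) \<Prod> f'(\<alpha>\<^sub>i)\<close>; for \<open>n = 5\<close> the sign is \<open>+1\<close>.\<close>
lemma root_disc_eq_prod_pderiv:
  assumes "length xs = 5"
  shows "root_disc xs = (\<Prod>x\<leftarrow>xs. poly (pderiv (\<Prod>y\<leftarrow>xs. [:-y, 1:])) x)"
proof -
  obtain a b c d e where xs: "xs = [a, b, c, d, e]"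
    using assms by (auto simp: length_Suc_conv numeral_eq_Suc)
  define F where "F = pderiv (\<Prod>y\<leftarrow>xs. [:-y, 1:])"
  have F_rotate: "poly F x = (\<Prod>y\<leftarrow>ys. x - y)" if "mset (x # ys) = mset xs" for x ys
  proof -
    have "(\<Prod>y\<leftarrow>xs. [:-y, 1:]) = (\<Prod>y\<leftarrow>x # ys. [:-y, 1:])"
      by (rule prod_list_map_mset_eq[OF that, symmetric])
    then show ?thesis unfolding F_def by (simp only: poly_pderiv_prod_linear_factors_Cons)
  qed
  have "poly F a = (a-b)*(a-c)*(a-d)*(a-e)"
    by (subst F_rotate[of a "[b, c, d, e]"]) (simp_all add: xs mult.assoc)
  moreover have "poly F b = (-(a-b))*(b-c)*(b-d)*(b-e)"
    by (subst F_rotate[of b "[a, c, d, e]"]) (simp_all add: xs mult.assoc)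
  moreover have "poly F c = (-(a-c))*(-(b-c))*(c-d)*(c-e)"
    by (subst F_rotate[of c "[a, b, d, e]"]) (simp_all add: xs mult.assoc)
  moreover have "poly F d = (-(a-d))*(-(b-d))*(-(c-d))*(d-e)"
    by (subst F_rotate[of d "[a, b, c, e]"]) (simp_all add: xs mult.assoc)
  moreover have "poly F e = (-(a-e))*(-(b-e))*(-(c-e))*(-(d-e))"
    by (subst F_rotate[of e "[a, b, c, d]"]) (simp_all add: xs mult.assoc)
  moreover have "u1^2 * u2^2 * u3^2 * u4^2 * u5^2 * u6^2 * u7^2 * u8^2 * u9^2 * u10^2
      = (u1*u2*u3*u4) * ((-u1)*u5*u6*u7) * ((-u2)*(-u5)*u8*u9)
        * ((-u3)*(-u6)*(-u8)*u10) * ((-u4)*(-u7)*(-u9)*(-u10))" for u1 u2 u3 u4 u5 u6 u7 u8 u9 u10 :: complex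
    by algebra
  ultimately have "root_disc xs = poly F a * (poly F b * (poly F c * (poly F d * poly F e)))"
    unfolding xs root_disc_5 by (simp only: mult.assoc)
  then show ?thesis unfolding F_def[symmetric] by (simp add: xs)
qed

lemma root_disc_mset_eq:
  assumes "length xs = 5" "mset ys = mset xs"
  shows "root_disc ys = root_disc xs"
proof -
  let ?f' = "poly (pderiv (\<Prod>y\<leftarrow>xs. [:-y, 1:]))"
  have "length ys = 5" using assms by (metis size_mset)
  then have "root_disc ys = (\<Prod>x\<leftarrow>ys. poly (pderiv (\<Prod>y\<leftarrow>ys. [:-y, 1:])) x)"
    by (rule root_disc_eq_prod_pderiv)
  also have "\<dots> = (\<Prod>x\<leftarrow>ys. ?f' x)"
    by (simp only: prod_list_map_mset_eq[OF assms(2), of "\<lambda>y. [:-y, 1:]"])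
  also have "\<dots> = (\<Prod>x\<leftarrow>xs. ?f' x)"
    by (rule prod_list_map_mset_eq[OF assms(2)])
  also have "\<dots> = root_disc xs"
    by (rule root_disc_eq_prod_pderiv[OF assms(1), symmetric])
  finally show ?thesis .
qed

lemma root_disc_not_distinct:
  assumes "length xs = 5" "\<not> distinct xs"
  shows "root_disc xs = 0"
proof -
  obtain a b c d e where "xs = [a, b, c, d, e]"
    using assms(1) by (auto simp: length_Suc_conv numeral_eq_Suc)
  with assms(2) show ?thesis by (auto simp: root_disc_5)
qed

lemma mult_cnj_of_real: "(complex_of_real a - z) * (of_real a - cnj z) = of_real ((cmod (of_real a - z))^2)"
  using complex_norm_square[of "of_real a - z"] by simp

lemma diff_cnj_square: "(z - cnj z)^2 = of_real (-4 * (Im z)^2)"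
  by (simp add: complex_eq_iff power2_eq_square)

lemma root_disc_five_real:
  assumes "distinct [a, b, c, d, e :: real]"
  shows "Re (root_disc (map complex_of_real [a, b, c, d, e])) > 0"
  using assms by (simp add: root_disc_5 flip: of_real_diff of_real_power of_real_mult)

lemma root_disc_one_conj_pair:
  assumes "distinct [a, b, c :: real]" "Im z \<noteq> 0"
  shows "Re (root_disc [of_real a, of_real b, of_real c, z, cnj z]) < 0"
proof -
  let ?n = "\<lambda>x. (cmod (complex_of_real x - z))^2"
  have "root_disc [of_real a, of_real b, of_real c, z, cnj z] = of_real ((a-b)^2*(a-c)^2*(b-c)^2) *
     ((of_real a - z) * (of_real a - cnj z))^2 * ((of_real b - z) * (of_real b - cnj z))^2
     * ((of_real c - z) * (of_real c - cnj z))^2 * (z - cnj z)^2"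
    by (simp add: root_disc_5 power_mult_distrib mult_ac)
  also have "\<dots> = of_real ((a-b)^2*(a-c)^2*(b-c)^2 * (?n a)^2 * (?n b)^2 * (?n c)^2 * (-4 * (Im z)^2))"
    unfolding mult_cnj_of_real diff_cnj_square by simp
  finally have "Re (root_disc [of_real a, of_real b, of_real c, z, cnj z])
      = - ((a-b)^2*(a-c)^2*(b-c)^2 * (?n a)^2 * (?n b)^2 * (?n c)^2 * (4 * (Im z)^2))"
    by simp
  moreover have "?n x > 0" for x using assms(2) by (simp add: complex_eq_iff)
  ultimately show ?thesis using assms by simp
qed

lemma root_disc_two_conj_pairs:
  assumes "Im z \<noteq> 0" "Im w \<noteq> 0" "w \<noteq> z" "w \<noteq> cnj z"
  shows "Re (root_disc [of_real a, z, cnj z, w, cnj w]) > 0"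
proof -
  let ?A = "complex_of_real a"
  have "root_disc [?A, z, cnj z, w, cnj w] =
     ((?A - z) * (?A - cnj z))^2 * ((?A - w) * (?A - cnj w))^2 * (z - cnj z)^2 * (w - cnj w)^2 *
     ((z - w) * cnj (z - w))^2 * ((z - cnj w) * cnj (z - cnj w))^2"
    by (simp add: root_disc_5 power_mult_distrib mult_ac)
  also have "\<dots> = of_real ((cmod (?A - z))^4 * (cmod (?A - w))^4 * (16 * (Im z)^2 * (Im w)^2)
      * (cmod (z - w))^4 * (cmod (z - cnj w))^4)"
    unfolding mult_cnj_of_real diff_cnj_square complex_norm_square[symmetric] by simp
  finally have "Re (root_disc [?A, z, cnj z, w, cnj w]) = (cmod (?A - z))^4 * (cmod (?A - w))^4
      * (16 * (Im z)^2 * (Im w)^2) * (cmod (z - w))^4 * (cmod (z - cnj w))^4"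
    by simp
  moreover have "?A \<noteq> z" "?A \<noteq> w" "z \<noteq> w" "z \<noteq> cnj w"
    using assms by (auto simp: complex_eq_iff)
  ultimately show ?thesis using assms by simp
qed

lemma conj_closed_nonreal_cases:
  fixes S :: "complex set"
  assumes "finite S" "card S \<le> 5" "\<forall>z\<in>S. cnj z \<in> S"
  obtains (all_real) "{u \<in> S. Im u \<noteq> 0} = {}"
  | (one_pair) z where "Im z \<noteq> 0" "{u \<in> S. Im u \<noteq> 0} = {z, cnj z}"
  | (two_pairs) z w where "Im z \<noteq> 0" "Im w \<noteq> 0" "w \<notin> {z, cnj z}"
      "{u \<in> S. Im u \<noteq> 0} = {z, cnj z, w, cnj w}"
proof -
  have cnj_ne: "cnj u \<noteq> u" if "Im u \<noteq> 0" for u using that by (simp add: complex_eq_iff)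
  have cnj_notin: "cnj u \<notin> {z, cnj z}" if "u \<notin> {z, cnj z}" for u z :: complex
    using that by auto
  consider "{u \<in> S. Im u \<noteq> 0} = {}"
    | z where "z \<in> S" "Im z \<noteq> 0" "{u \<in> S. Im u \<noteq> 0} \<subseteq> {z, cnj z}"
    | z w where "z \<in> S" "Im z \<noteq> 0" "w \<in> S" "Im w \<noteq> 0" "w \<notin> {z, cnj z}"
    by blast
  then show thesis
  proof cases
    case 1
    then show thesis by (rule all_real)
  next
    case (2 z)
    with assms(3) have "{u \<in> S. Im u \<noteq> 0} = {z, cnj z}" by auto
    with 2 show thesis by (intro one_pair)
  next
    case (3 z w)
    have "{u \<in> S. Im u \<noteq> 0} \<subseteq> {z, cnj z, w, cnj w}"
    proof
      fix u assume u: "u \<in> {u \<in> S. Im u \<noteq> 0}"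
      show "u \<in> {z, cnj z, w, cnj w}"
      proof (rule ccontr)
        assume "u \<notin> {z, cnj z, w, cnj w}"
        then have "u \<notin> {z, cnj z}" "u \<notin> {w, cnj w}" by auto
        have "{z, cnj z, w, cnj w, u, cnj u} \<subseteq> S" using 3 u assms(3) by auto
        then have "card {z, cnj z, w, cnj w, u, cnj u} \<le> 5"
          using card_mono[OF assms(1)] assms(2) by (meson le_trans)
        moreover have "card {z, cnj z, w, cnj w, u, cnj u} = 6"
          using 3 u cnj_ne[of z] cnj_ne[of w] cnj_ne[of u] cnj_notin[of w z]
            cnj_notin[of u z] cnj_notin[of u w] \<open>u \<notin> {z, cnj z}\<close> \<open>u \<notin> {w, cnj w}\<close>
          by auto
        ultimately show False by simp
      qed
    qed
    with 3 assms(3) have "{u \<in> S. Im u \<noteq> 0} = {z, cnj z, w, cnj w}" by auto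
    with 3 show thesis by (intro two_pairs)
  qed
qed

lemma mset_eq_if_set_eq_distinct:
  assumes "distinct xs" "set ys = set xs" "length ys = length xs"
  shows "mset ys = mset xs"
proof -
  have "distinct ys" using assms by (metis card_distinct distinct_card)
  with assms(1,2) show ?thesis by (simp add: set_eq_iff_mset_eq_distinct)
qed

lemma conj_closed_distinct_list_cases:
  fixes xs :: "complex list"
  assumes "distinct xs" "length xs = 5" "\<forall>z\<in>set xs. cnj z \<in> set xs"
  obtains (five_real) a b c d e where "mset xs = mset (map complex_of_real [a, b, c, d, e])"
  | (three_real) a b c z where "Im z \<noteq> 0" "mset xs = mset [of_real a, of_real b, of_real c, z, cnj z]"
  | (one_real) a z w where "Im z \<noteq> 0" "Im w \<noteq> 0"
      "mset xs = mset [of_real a, z, cnj z, w, cnj w]"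
proof -
  have card: "card (set xs) = 5" using assms(1,2) by (simp add: distinct_card)
  have of_real_Re_real: "complex_of_real (Re u) = u" if "u \<in> set xs - {u \<in> set xs. Im u \<noteq> 0}" for u
    using that by (simp add: complex_eq_iff)
  have mset_eq: "mset xs = mset ys" if "set ys = set xs" "length ys = 5" for ys
    using mset_eq_if_set_eq_distinct[OF assms(1) that(1)] that(2) assms(2) by simp
  have "finite (set xs)" "card (set xs) \<le> 5" using card by simp_all
  from this assms(3) show thesis
  proof (cases rule: conj_closed_nonreal_cases)
    case all_real
    obtain x1 x2 x3 x4 x5 where xs: "xs = [x1, x2, x3, x4, x5]"
      using assms(2) by (auto simp: length_Suc_conv numeral_eq_Suc)
    have "\<forall>u\<in>set xs. Im u = 0" using all_real by blast
    then have "Im x1 = 0" "Im x2 = 0" "Im x3 = 0" "Im x4 = 0" "Im x5 = 0" by (simp_all add: xs)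
    then have "map complex_of_real [Re x1, Re x2, Re x3, Re x4, Re x5] = xs"
      unfolding xs by (simp add: complex_eq_iff)
    then show thesis using five_real by metis
  next
    case (one_pair z)
    have "card (set xs - {z, cnj z}) = 3"
      using one_pair card by (subst card_Diff_subset) (auto simp: complex_eq_iff)
    then obtain a b c where abc: "set xs - {z, cnj z} = {a, b, c}" by (auto simp: card_3_iff)
    then have "[of_real (Re a), of_real (Re b), of_real (Re c), z, cnj z] = [a, b, c, z, cnj z]"
      using one_pair of_real_Re_real by auto
    moreover have "set [a, b, c, z, cnj z] = set xs" using one_pair abc by auto
    ultimately show thesis
      using one_pair mset_eq[of "[a, b, c, z, cnj z]"] by (intro three_real[of z "Re a" "Re b" "Re c"]) simp_all
  next
    case (two_pairs z w)
    have "card {z, cnj z, w, cnj w} = 4" using two_pairs by (auto simp: complex_eq_iff)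
    then have "card (set xs - {z, cnj z, w, cnj w}) = 1"
      using two_pairs card by (subst card_Diff_subset) auto
    then obtain a where a: "set xs - {z, cnj z, w, cnj w} = {a}" by (auto simp: card_1_singleton_iff)
    then have "of_real (Re a) = a" using two_pairs of_real_Re_real by auto
    moreover have "set [a, z, cnj z, w, cnj w] = set xs" using two_pairs a by auto
    ultimately show thesis
      using two_pairs mset_eq[of "[a, z, cnj z, w, cnj w]"] by (intro one_real[of z w "Re a"]) simp_all
  qed
qed

section \<open>Sylvester's criterion via Schur complements\<close>

definition quad_form :: "(nat \<Rightarrow> nat \<Rightarrow> real) \<Rightarrow> nat \<Rightarrow> (nat \<Rightarrow> real) \<Rightarrow> real" where
  "quad_form A n c = (\<Sum>i<n. \<Sum>j<n. A i j * c i * c j)"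

definition pos_def :: "(nat \<Rightarrow> nat \<Rightarrow> real) \<Rightarrow> nat \<Rightarrow> bool" where
  "pos_def A n \<longleftrightarrow> (\<forall>c. (\<exists>i<n. c i \<noteq> 0) \<longrightarrow> quad_form A n c > 0)"

definition symmetric_matrix :: "(nat \<Rightarrow> nat \<Rightarrow> real) \<Rightarrow> bool" where
  "symmetric_matrix A \<longleftrightarrow> (\<forall>i j. A i j = A j i)"

definition schur_compl :: "(nat \<Rightarrow> nat \<Rightarrow> real) \<Rightarrow> nat \<Rightarrow> nat \<Rightarrow> real" where
  "schur_compl A i j = A (Suc i) (Suc j) - A (Suc i) 0 * A 0 (Suc j) / A 0 0"

text \<open>The pivots of Gaussian elimination without row exchanges.\<close>
definition pivot :: "(nat \<Rightarrow> nat \<Rightarrow> real) \<Rightarrow> nat \<Rightarrow> real" where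
  "pivot A k = (schur_compl ^^ k) A 0 0"

lemma symmetric_schur_compl: "symmetric_matrix A \<Longrightarrow> symmetric_matrix (schur_compl A)"
  unfolding symmetric_matrix_def schur_compl_def by (simp add: mult.commute)

lemma pivot_0: "pivot A 0 = A 0 0"
  by (simp add: pivot_def)

lemma pivot_Suc: "pivot A (Suc k) = pivot (schur_compl A) k"
  by (simp add: pivot_def funpow_swap1)

lemma quad_form_eq_0: "(\<And>i. i < n \<Longrightarrow> c i = 0) \<Longrightarrow> quad_form A n c = 0"
  by (simp add: quad_form_def)

lemma quad_form_Suc:
  assumes "symmetric_matrix A" "A 0 0 \<noteq> 0"
  shows "quad_form A (Suc n) c = A 0 0 * (c 0 + (\<Sum>j<n. A 0 (Suc j) * c (Suc j)) / A 0 0)^2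
           + quad_form (schur_compl A) n (\<lambda>j. c (Suc j))"
proof -
  define B where "B = (\<Sum>j<n. A 0 (Suc j) * c (Suc j))"
  define Q where "Q = (\<Sum>i<n. \<Sum>j<n. A (Suc i) (Suc j) * c (Suc i) * c (Suc j))"
  have B': "(\<Sum>i<n. A (Suc i) 0 * c (Suc i)) = B"
    unfolding B_def using assms(1) by (simp add: symmetric_matrix_def)
  have "quad_form A (Suc n) c = A 0 0 * c 0 * c 0 + c 0 * B + c 0 * (\<Sum>i<n. A (Suc i) 0 * c (Suc i)) + Q"
    unfolding quad_form_def B_def Q_def
    by (simp only: sum.lessThan_Suc_shift)
       (simp add: sum.distrib sum_distrib_left sum_distrib_right algebra_simps)
  then have 1: "quad_form A (Suc n) c = A 0 0 * c 0 * c 0 + 2 * c 0 * B + Q"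
    using B' by simp
  have "quad_form (schur_compl A) n (\<lambda>j. c (Suc j))
      = Q - (\<Sum>i<n. A (Suc i) 0 * c (Suc i)) * (\<Sum>j<n. A 0 (Suc j) * c (Suc j)) / A 0 0"
    unfolding quad_form_def schur_compl_def Q_def
    by (simp add: sum_subtractf sum_divide_distrib sum_product algebra_simps, subst sum.swap)
       (simp add: algebra_simps)
  then have 2: "quad_form (schur_compl A) n (\<lambda>j. c (Suc j)) = Q - B * B / A 0 0"
    using B' B_def by simp
  show ?thesis unfolding 1 2 B_def[symmetric] using assms(2)
    by (simp add: field_simps power2_eq_square)
qed

lemma pos_def_SucD:
  assumes "symmetric_matrix A" "pos_def A (Suc n)"
  shows "A 0 0 > 0" "pos_def (schur_compl A) n"
proof -
  let ?e = "\<lambda>i. if i = 0 then 1 else 0 :: real"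
  have "quad_form A (Suc n) ?e = A 0 0"
    unfolding quad_form_def by (simp only: sum.lessThan_Suc_shift) simp
  moreover have "\<exists>i<Suc n. ?e i \<noteq> 0" by auto
  ultimately show a0: "A 0 0 > 0" using assms(2) unfolding pos_def_def by auto
  show "pos_def (schur_compl A) n" unfolding pos_def_def
  proof (intro allI impI)
    fix c :: "nat \<Rightarrow> real" assume c: "\<exists>i<n. c i \<noteq> 0"
    \<comment> \<open>choose \<open>d 0\<close> so that the completed square vanishes\<close>
    define d where "d i = (if i = 0 then - (\<Sum>j<n. A 0 (Suc j) * c j) / A 0 0 else c (i - 1))" for i
    have "quad_form A (Suc n) d = quad_form (schur_compl A) n c"
      using quad_form_Suc[OF assms(1)] a0 by (simp add: d_def)
    moreover have "\<exists>i<Suc n. d i \<noteq> 0"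
      using c unfolding d_def by (metis Suc_less_eq diff_Suc_1 nat.distinct(1))
    ultimately show "quad_form (schur_compl A) n c > 0"
      using assms(2) unfolding pos_def_def by metis
  qed
qed

lemma pos_def_SucI:
  assumes "symmetric_matrix A" "A 0 0 > 0" "pos_def (schur_compl A) n"
  shows "pos_def A (Suc n)"
  unfolding pos_def_def
proof (intro allI impI)
  fix c :: "nat \<Rightarrow> real" assume c: "\<exists>i<Suc n. c i \<noteq> 0"
  let ?S = "A 0 0 * (c 0 + (\<Sum>j<n. A 0 (Suc j) * c (Suc j)) / A 0 0)^2"
  have eq: "quad_form A (Suc n) c = ?S + quad_form (schur_compl A) n (\<lambda>j. c (Suc j))"
    using quad_form_Suc[OF assms(1)] assms(2) by simp
  show "quad_form A (Suc n) c > 0"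
  proof (cases "\<exists>j<n. c (Suc j) \<noteq> 0")
    case True
    then have "quad_form (schur_compl A) n (\<lambda>j. c (Suc j)) > 0"
      using assms(3) unfolding pos_def_def by auto
    moreover have "?S \<ge> 0" using assms(2) by simp
    ultimately show ?thesis using eq by linarith
  next
    case False
    then have "c 0 \<noteq> 0" using c by (metis less_Suc_eq_0_disj)
    moreover have "quad_form (schur_compl A) n (\<lambda>j. c (Suc j)) = 0"
      using False by (intro quad_form_eq_0) auto
    ultimately show ?thesis using eq False assms(2) by simp
  qed
qed

lemma pos_def_iff_pivots_pos:
  "symmetric_matrix A \<Longrightarrow> pos_def A n \<longleftrightarrow> (\<forall>k<n. pivot A k > 0)"
proof (induction n arbitrary: A)
  case 0
  then show ?case by (simp add: pos_def_def)
next
  case (Suc n)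
  have "pos_def A (Suc n) \<longleftrightarrow> A 0 0 > 0 \<and> pos_def (schur_compl A) n"
    using pos_def_SucD pos_def_SucI Suc.prems by blast
  also have "\<dots> \<longleftrightarrow> (\<forall>k<Suc n. pivot A k > 0)"
    using Suc.IH[OF symmetric_schur_compl[OF Suc.prems]]
    by (auto simp: pivot_0 pivot_Suc All_less_Suc2)
  finally show ?case .
qed

definition minor2 :: "(nat \<Rightarrow> nat \<Rightarrow> real) \<Rightarrow> real" where
  "minor2 A = A 0 0*A 1 1 - A 0 1*A 1 0"

definition minor3 :: "(nat \<Rightarrow> nat \<Rightarrow> real) \<Rightarrow> real" where
  "minor3 A = A 0 0*A 1 1*A 2 2 - A 0 0*A 1 2*A 2 1 - A 0 1*A 1 0*A 2 2 + A 0 1*A 1 2*A 2 0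
     + A 0 2*A 1 0*A 2 1 - A 0 2*A 1 1*A 2 0"

definition minor4 :: "(nat \<Rightarrow> nat \<Rightarrow> real) \<Rightarrow> real" where
  "minor4 A = A 0 0*A 1 1*A 2 2*A 3 3 - A 0 0*A 1 1*A 2 3*A 3 2 - A 0 0*A 1 2*A 2 1*A 3 3
     + A 0 0*A 1 2*A 2 3*A 3 1 + A 0 0*A 1 3*A 2 1*A 3 2 - A 0 0*A 1 3*A 2 2*A 3 1
     - A 0 1*A 1 0*A 2 2*A 3 3 + A 0 1*A 1 0*A 2 3*A 3 2 + A 0 1*A 1 2*A 2 0*A 3 3
     - A 0 1*A 1 2*A 2 3*A 3 0 - A 0 1*A 1 3*A 2 0*A 3 2 + A 0 1*A 1 3*A 2 2*A 3 0
     + A 0 2*A 1 0*A 2 1*A 3 3 - A 0 2*A 1 0*A 2 3*A 3 1 - A 0 2*A 1 1*A 2 0*A 3 3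
     + A 0 2*A 1 1*A 2 3*A 3 0 + A 0 2*A 1 3*A 2 0*A 3 1 - A 0 2*A 1 3*A 2 1*A 3 0
     - A 0 3*A 1 0*A 2 1*A 3 2 + A 0 3*A 1 0*A 2 2*A 3 1 + A 0 3*A 1 1*A 2 0*A 3 2
     - A 0 3*A 1 1*A 2 2*A 3 0 - A 0 3*A 1 2*A 2 0*A 3 1 + A 0 3*A 1 2*A 2 1*A 3 0"

lemma minor2_schur_compl: "A 0 0 \<noteq> 0 \<Longrightarrow> minor2 A = A 0 0 * schur_compl A 0 0"
  unfolding minor2_def schur_compl_def by (simp add: field_simps)

lemma minor3_schur_compl: "A 0 0 \<noteq> 0 \<Longrightarrow> minor3 A = A 0 0 * minor2 (schur_compl A)"
  unfolding minor2_def minor3_def schur_compl_def by (simp add: field_simps eval_nat_numeral; algebra)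

lemma minor4_schur_compl: "A 0 0 \<noteq> 0 \<Longrightarrow> minor4 A = A 0 0 * minor3 (schur_compl A)"
  unfolding minor3_def minor4_def schur_compl_def by (simp add: field_simps eval_nat_numeral; algebra)

lemma pivots_pos_iff_minors_pos:
  "(\<forall>k<4. pivot A k > 0) \<longleftrightarrow> A 0 0 > 0 \<and> minor2 A > 0 \<and> minor3 A > 0 \<and> minor4 A > 0"
proof -
  let ?A1 = "schur_compl A" let ?A2 = "schur_compl ?A1" let ?A3 = "schur_compl ?A2"
  have pivots: "pivot A 0 = A 0 0" "pivot A 1 = ?A1 0 0" "pivot A 2 = ?A2 0 0" "pivot A 3 = ?A3 0 0"
    by (simp_all add: pivot_def numeral_eq_Suc)
  have "(\<forall>k<4. pivot A k > 0) \<longleftrightarrow> A 0 0 > 0 \<and> ?A1 0 0 > 0 \<and> ?A2 0 0 > 0 \<and> ?A3 0 0 > 0"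
    by (simp add: pivots[symmetric] numeral_eq_Suc All_less_Suc2)
  also have "\<dots> \<longleftrightarrow> A 0 0 > 0 \<and> minor2 A > 0 \<and> minor3 A > 0 \<and> minor4 A > 0"
  proof (cases "A 0 0 > 0 \<and> ?A1 0 0 > 0 \<and> ?A2 0 0 > 0")
    case True
    then have "minor2 A = A 0 0 * ?A1 0 0" "minor3 A = A 0 0 * ?A1 0 0 * ?A2 0 0"
      "minor4 A = (A 0 0 * ?A1 0 0 * ?A2 0 0) * ?A3 0 0"
      by (simp_all add: minor4_schur_compl minor3_schur_compl minor2_schur_compl)
    with True show ?thesis by (simp add: zero_less_mult_iff mult_less_0_iff)
  next
    case False
    have "minor2 A > 0 \<Longrightarrow> A 0 0 > 0 \<Longrightarrow> ?A1 0 0 > 0"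
      by (simp add: minor2_schur_compl zero_less_mult_iff)
    moreover have "minor3 A > 0 \<Longrightarrow> A 0 0 > 0 \<Longrightarrow> ?A1 0 0 > 0 \<Longrightarrow> ?A2 0 0 > 0"
      by (simp add: minor3_schur_compl minor2_schur_compl zero_less_mult_iff)
    ultimately show ?thesis using False by auto
  qed
  finally show ?thesis .
qed

section \<open>The Hankel matrix of power sums\<close>

lemma hankel_form_power_sums:
  fixes xs :: "'a::comm_ring_1 list"
  shows "(\<Sum>i<n. \<Sum>j<n. (\<Sum>x\<leftarrow>xs. x^(i+j)) * c i * c j) = (\<Sum>x\<leftarrow>xs. (\<Sum>i<n. c i * x^i)^2)"
proof (induction xs)
  case (Cons x xs)
  have "(\<Sum>i<n. \<Sum>j<n. x^(i+j) * c i * c j) = (\<Sum>i<n. c i * x^i)^2"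
    by (simp add: power2_eq_square sum_product power_add mult_ac)
  with Cons show ?case by (simp add: distrib_right sum.distrib)
qed simp

text \<open>Newton's identities: entry \<open>m\<close> is the power sum \<open>\<Sum> \<alpha>\<^sub>i^m\<close> of the roots of the quintic.\<close>
definition quintic_power_sums :: "real \<Rightarrow> real \<Rightarrow> real \<Rightarrow> real \<Rightarrow> real \<Rightarrow> real list" where
  "quintic_power_sums p q r s t =
    (let s0 = 5; s1 = -p; s2 = -p*s1 - 2*q; s3 = -p*s2 - q*s1 - 3*r;
         s4 = -p*s3 - q*s2 - r*s1 - 4*s; s5 = -p*s4 - q*s3 - r*s2 - s*s1 - 5*t;
         s6 = -p*s5 - q*s4 - r*s3 - s*s2 - t*s1
     in [s0, s1, s2, s3, s4, s5, s6])"

definition quintic_hankel :: "real \<Rightarrow> real \<Rightarrow> real \<Rightarrow> real \<Rightarrow> real \<Rightarrow> nat \<Rightarrow> nat \<Rightarrow> real" where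
  "quintic_hankel p q r s t i j = quintic_power_sums p q r s t ! (i + j)"

lemma quintic_power_sums_eq:
  assumes "complex_root_list (quintic p q r s t) xs" "m \<le> 6"
  shows "of_real (quintic_power_sums p q r s t ! m) = (\<Sum>x\<leftarrow>xs. x^m)"
proof -
  obtain a b c d e where xs: "xs = [a, b, c, d, e]"
    using quintic_root_list_length[OF assms(1)] by (auto simp: length_Suc_conv numeral_eq_Suc)
  note vieta = quintic_vieta[OF assms(1)[unfolded xs]]
  have "map complex_of_real (quintic_power_sums p q r s t) = map (\<lambda>m. \<Sum>x\<leftarrow>xs. x^m) [0..<7]"
    unfolding xs quintic_power_sums_def Let_def
    by (simp add: vieta upt_rec; intro conjI; algebra)
  from arg_cong[OF this, of "\<lambda>ys. ys ! m"] assms(2) show ?thesis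
    by (simp add: quintic_power_sums_def Let_def del: list.map upt_Suc)
qed

lemma quintic_hankel_form:
  assumes "complex_root_list (quintic p q r s t) xs"
  shows "of_real (quad_form (quintic_hankel p q r s t) 4 c) = (\<Sum>x\<leftarrow>xs. (\<Sum>i<4. of_real (c i) * x^i)^2)"
proof -
  have "of_real (quad_form (quintic_hankel p q r s t) 4 c)
      = (\<Sum>i<4. \<Sum>j<4. (\<Sum>x\<leftarrow>xs. x^(i+j)) * of_real (c i) * of_real (c j))"
    unfolding quad_form_def quintic_hankel_def of_real_sum of_real_mult
    by (intro sum.cong refl) (simp add: quintic_power_sums_eq[OF assms])
  then show ?thesis by (simp only: hankel_form_power_sums)
qed

lemma quintic_hankel_pos_def_iff:
  "pos_def (quintic_hankel p q r s t) 4 \<longleftrightarrow> L3 p q r s t > 0 \<and> L2 p q r s t > 0 \<and> L1 p q r s t > 0"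
proof -
  let ?H = "quintic_hankel p q r s t"
  have "symmetric_matrix ?H" by (simp add: symmetric_matrix_def quintic_hankel_def add.commute)
  moreover have "?H 0 0 = 5" by (simp add: quintic_hankel_def quintic_power_sums_def Let_def)
  moreover have "minor2 ?H = 2 * L3 p q r s t"
    unfolding minor2_def quintic_hankel_def quintic_power_sums_def L3_def Let_def
    by (simp add: eval_nat_numeral; algebra)
  moreover have "minor3 ?H = L2 p q r s t"
    unfolding minor3_def quintic_hankel_def quintic_power_sums_def L2_def Let_def
    by (simp add: eval_nat_numeral; algebra)
  moreover have "minor4 ?H = L1 p q r s t"
    unfolding minor4_def quintic_hankel_def quintic_power_sums_def L1_def Let_def
    by (simp add: eval_nat_numeral; algebra)
  ultimately show ?thesis by (simp add: pos_def_iff_pivots_pos pivots_pos_iff_minors_pos)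
qed

lemma quintic_hankel_pos_def_if_five_real_roots:
  assumes roots: "complex_root_list (quintic p q r s t) (map complex_of_real [a, b, c, d, e])"
    and distinct: "distinct [a, b, c, d, e]"
  shows "pos_def (quintic_hankel p q r s t) 4"
  unfolding pos_def_def
proof (intro allI impI)
  fix x :: "nat \<Rightarrow> real" assume x: "\<exists>i<4. x i \<noteq> 0"
  define P where "P = [:x 0, x 1, x 2, x 3:]"
  have "P \<noteq> 0"
  proof
    assume "P = 0"
    then have "x 0 = 0" "x 1 = 0" "x 2 = 0" "x 3 = 0" by (simp_all add: P_def)
    with x show False by (auto simp: numeral_eq_Suc less_Suc_eq)
  qed
  have "(\<Sum>i<4. of_real (x i) * (of_real y)^i) = complex_of_real (poly P y)" for y
    by (simp add: P_def eval_nat_numeral algebra_simps)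
  with quintic_hankel_form[OF roots, of x]
  have Q: "quad_form (quintic_hankel p q r s t) 4 x
      = (poly P a)^2 + (poly P b)^2 + (poly P c)^2 + (poly P d)^2 + (poly P e)^2"
    by (simp flip: of_real_power of_real_add)
  have "\<not> {a, b, c, d, e} \<subseteq> {y. poly P y = 0}"
  proof
    assume "{a, b, c, d, e} \<subseteq> {y. poly P y = 0}"
    then have "card {a, b, c, d, e} \<le> card {y. poly P y = 0}"
      using poly_roots_finite[OF \<open>P \<noteq> 0\<close>] by (rule card_mono[rotated])
    also have "\<dots> \<le> degree P" using card_poly_roots_bound[OF \<open>P \<noteq> 0\<close>] .
    also have "\<dots> \<le> 3" by (simp add: P_def)
    finally show False using distinct by simp
  qed
  then show "quad_form (quintic_hankel p q r s t) 4 x > 0"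
    unfolding Q by (auto simp: add_pos_nonneg add_nonneg_pos)
qed

lemma exists_nonzero_orthogonal:
  "\<exists>k1 k2 k3::real. (k1 \<noteq> 0 \<or> k2 \<noteq> 0 \<or> k3 \<noteq> 0) \<and> v1*k1 + v2*k2 + v3*k3 = 0"
proof (cases "v1 = 0")
  case True
  then show ?thesis by (intro exI[of _ 1] exI[of _ 0]) simp
next
  case False
  then show ?thesis by (intro exI[of _ v2] exI[of _ "-v1"] exI[of _ 0]) (simp add: algebra_simps)
qed

lemma exists_nonzero_orthogonal2:
  "\<exists>k1 k2 k3::real. (k1 \<noteq> 0 \<or> k2 \<noteq> 0 \<or> k3 \<noteq> 0) \<and>
     u1*k1 + u2*k2 + u3*k3 = 0 \<and> v1*k1 + v2*k2 + v3*k3 = 0"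
proof -
  define c1 c2 c3 where "c1 = u2*v3 - u3*v2" and "c2 = u3*v1 - u1*v3" and "c3 = u1*v2 - u2*v1"
  show ?thesis
  proof (cases "c1 \<noteq> 0 \<or> c2 \<noteq> 0 \<or> c3 \<noteq> 0")
    case True
    have "u1*c1 + u2*c2 + u3*c3 = 0" "v1*c1 + v2*c2 + v3*c3 = 0"
      unfolding c1_def c2_def c3_def by algebra+
    with True show ?thesis by blast
  next
    case parallel: False
    show ?thesis
    proof (cases "u1 = 0 \<and> u2 = 0 \<and> u3 = 0")
      case True
      with exists_nonzero_orthogonal[of v1 v2 v3] show ?thesis by auto
    next
      case False
      obtain k1 k2 k3 where k: "k1 \<noteq> 0 \<or> k2 \<noteq> 0 \<or> k3 \<noteq> 0" "u1*k1 + u2*k2 + u3*k3 = 0"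
        using exists_nonzero_orthogonal by blast
      \<comment> \<open>Lagrange's identity: \<open>|u|\<^sup>2 (v\<cdot>k) = (u\<cdot>k)(u\<cdot>v) + (u\<times>v)\<cdot>(u\<times>k)\<close>\<close>
      have "(u1^2 + u2^2 + u3^2) * (v1*k1 + v2*k2 + v3*k3)
          = (u1*k1 + u2*k2 + u3*k3) * (u1*v1 + u2*v2 + u3*v3)
            + (c1*(u2*k3 - u3*k2) + c2*(u3*k1 - u1*k3) + c3*(u1*k2 - u2*k1))"
        unfolding c1_def c2_def c3_def by algebra
      moreover have "u1^2 + u2^2 + u3^2 > 0"
        using False by (auto simp: add_pos_nonneg add_nonneg_pos)
      ultimately have "v1*k1 + v2*k2 + v3*k3 = 0" using k(2) parallel by simp
      with k show ?thesis by blast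
    qed
  qed
qed

lemma quintic_hankel_not_pos_def_if_one_real_root:
  assumes roots: "complex_root_list (quintic p q r s t) [of_real a, z, cnj z, w, cnj w]"
  shows "\<not> pos_def (quintic_hankel p q r s t) 4"
proof
  assume pd: "pos_def (quintic_hankel p q r s t) 4"
  let ?A = "complex_of_real a"
  \<comment> \<open>a real cubic \<open>g(y) = (y - a)(k1 + k2 y + k3 y\<^sup>2)\<close> with \<open>Re g(z) = Re g(w) = 0\<close>\<close>
  obtain k1 k2 k3 where k: "k1 \<noteq> 0 \<or> k2 \<noteq> 0 \<or> k3 \<noteq> 0"
    "Re (z - ?A) * k1 + Re ((z - ?A)*z) * k2 + Re ((z - ?A)*z^2) * k3 = 0"
    "Re (w - ?A) * k1 + Re ((w - ?A)*w) * k2 + Re ((w - ?A)*w^2) * k3 = 0"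
    using exists_nonzero_orthogonal2 by blast
  define x where "x i = (if i = 0 then -a*k1 else if i = 1 then k1 - a*k2 else if i = 2 then k2 - a*k3 else k3)"
    for i :: nat
  define g where "g y = (\<Sum>i<4. of_real (x i) * y^i)" for y :: complex
  have x_nz: "\<exists>i<4. x i \<noteq> 0"
  proof (rule ccontr)
    assume "\<not> ?thesis"
    then have "x 3 = 0" "x 2 = 0" "x 1 = 0" by auto
    then show False using k(1) by (simp add: x_def)
  qed
  have g: "g y = of_real k1 * (y - ?A) + of_real k2 * ((y - ?A)*y) + of_real k3 * ((y - ?A)*y^2)" for y
    unfolding g_def x_def by (simp add: eval_nat_numeral; algebra)
  have g_cnj: "g (cnj y) = cnj (g y)" for y
    unfolding g_def by simp
  have "Re (g z) = 0" "Re (g w) = 0" using k(2,3) by (simp_all add: g mult.commute)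
  have sq: "u^2 + cnj u^2 = of_real (- 2 * (Im u)^2)" if "Re u = 0" for u
    using that by (simp add: complex_eq_iff power2_eq_square)
  have "of_real (quad_form (quintic_hankel p q r s t) 4 x) = g ?A^2 + g z^2 + g (cnj z)^2 + g w^2 + g (cnj w)^2"
    using quintic_hankel_form[OF roots, of x] by (simp add: g_def)
  also have "\<dots> = (g z^2 + cnj (g z)^2) + (g w^2 + cnj (g w)^2)"
    using g[of ?A] by (simp add: g_cnj)
  also have "\<dots> = of_real (- 2 * (Im (g z))^2 - 2 * (Im (g w))^2)"
    using sq[OF \<open>Re (g z) = 0\<close>] sq[OF \<open>Re (g w) = 0\<close>] by simp
  finally have "quad_form (quintic_hankel p q r s t) 4 x \<le> 0"
    by (simp only: of_real_eq_iff) simp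
  with pd x_nz show False unfolding pos_def_def by force
qed

lemma quintic_repeated_root:
  assumes roots: "complex_root_list (quintic p q r s t) xs" and "\<not> distinct xs"
  shows "card (real_roots (quintic p q r s t)) + card (nonreal_roots (quintic p q r s t)) < 5"
    and "root_disc xs = 0"
proof -
  have len: "length xs = 5" by (rule quintic_root_list_length[OF roots])
  have "card {z \<in> set xs. Im z = 0} + card {z \<in> set xs. Im z \<noteq> 0} = card (set xs)"
    by (subst card_Un_disjoint[symmetric]) (auto intro: arg_cong[where f = card])
  also have "\<dots> < 5" using len \<open>\<not> distinct xs\<close> card_distinct card_length by (metis le_neq_implies_less)
  finally show "card (real_roots (quintic p q r s t)) + card (nonreal_roots (quintic p q r s t)) < 5"
    by (simp add: card_real_roots_eq[OF roots] nonreal_roots_eq[OF roots])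
  show "root_disc xs = 0" using root_disc_not_distinct[OF len] \<open>\<not> distinct xs\<close> .
qed

lemma quintic_five_real_roots:
  assumes roots: "complex_root_list (quintic p q r s t) xs" and "distinct xs"
    and xs: "mset xs = mset (map complex_of_real [a, b, c, d, e])"
  shows "card (real_roots (quintic p q r s t)) = 5" and "nonreal_roots (quintic p q r s t) = {}"
    and "Re (root_disc xs) > 0" and "L3 p q r s t > 0 \<and> L2 p q r s t > 0 \<and> L1 p q r s t > 0"
proof -
  let ?ys = "map complex_of_real [a, b, c, d, e]"
  have set: "set xs = set ?ys" using mset_eq_setD[OF xs] .
  have "distinct ?ys" using \<open>distinct xs\<close> xs mset_eq_imp_distinct_iff by blast
  then have distinct: "distinct [a, b, c, d, e]" by (simp only: distinct_map)
  have "{z \<in> set xs. Im z = 0} = set ?ys" unfolding set by auto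
  with \<open>distinct ?ys\<close> show "card (real_roots (quintic p q r s t)) = 5"
    by (simp only: card_real_roots_eq[OF roots] distinct_card) simp
  show "nonreal_roots (quintic p q r s t) = {}"
    unfolding nonreal_roots_eq[OF roots] set by auto
  show "Re (root_disc xs) > 0"
    using root_disc_five_real[OF distinct] root_disc_mset_eq[of ?ys xs] xs by simp
  show "L3 p q r s t > 0 \<and> L2 p q r s t > 0 \<and> L1 p q r s t > 0"
    using quintic_hankel_pos_def_if_five_real_roots[OF complex_root_list_mset[OF roots] distinct] xs
    by (simp add: quintic_hankel_pos_def_iff)
qed

lemma quintic_three_real_roots:
  assumes roots: "complex_root_list (quintic p q r s t) xs" and "distinct xs" and "Im z \<noteq> 0"
    and xs: "mset xs = mset [of_real a, of_real b, of_real c, z, cnj z]"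
  shows "card (real_roots (quintic p q r s t)) = 3"
    and "nonreal_roots (quintic p q r s t) = {z, cnj z}"
    and "Re (root_disc xs) < 0"
proof -
  let ?ys = "[of_real a, of_real b, of_real c, z, cnj z]"
  have set: "set xs = set ?ys" using mset_eq_setD[OF xs] .
  have "distinct ?ys" using \<open>distinct xs\<close> xs mset_eq_imp_distinct_iff by blast
  then have distinct: "distinct [a, b, c]" by auto
  have "{u \<in> set xs. Im u = 0} = {of_real a, of_real b, of_real c}" using \<open>Im z \<noteq> 0\<close> set by auto
  then show "card (real_roots (quintic p q r s t)) = 3"
    using distinct by (simp add: card_real_roots_eq[OF roots])
  show "nonreal_roots (quintic p q r s t) = {z, cnj z}"
    unfolding nonreal_roots_eq[OF roots] set using \<open>Im z \<noteq> 0\<close> by auto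
  show "Re (root_disc xs) < 0"
    using root_disc_one_conj_pair[OF distinct \<open>Im z \<noteq> 0\<close>] root_disc_mset_eq[of ?ys xs] xs by simp
qed

lemma quintic_one_real_root:
  assumes roots: "complex_root_list (quintic p q r s t) xs" and "distinct xs"
    and "Im z \<noteq> 0" "Im w \<noteq> 0" and xs: "mset xs = mset [of_real a, z, cnj z, w, cnj w]"
  shows "card (real_roots (quintic p q r s t)) = 1"
    and "card (nonreal_roots (quintic p q r s t)) = 4"
    and "Re (root_disc xs) > 0"
    and "\<not> (L3 p q r s t > 0 \<and> L2 p q r s t > 0 \<and> L1 p q r s t > 0)"
proof -
  let ?ys = "[of_real a, z, cnj z, w, cnj w]"
  have set: "set xs = set ?ys" using mset_eq_setD[OF xs] .
  have distinct: "distinct ?ys" using \<open>distinct xs\<close> xs mset_eq_imp_distinct_iff by blast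
  have "{u \<in> set xs. Im u = 0} = {of_real a}" using \<open>Im z \<noteq> 0\<close> \<open>Im w \<noteq> 0\<close> set by auto
  then show "card (real_roots (quintic p q r s t)) = 1"
    by (simp add: card_real_roots_eq[OF roots])
  have "nonreal_roots (quintic p q r s t) = {z, cnj z, w, cnj w}"
    unfolding nonreal_roots_eq[OF roots] set using \<open>Im z \<noteq> 0\<close> \<open>Im w \<noteq> 0\<close> by auto
  then show "card (nonreal_roots (quintic p q r s t)) = 4" using distinct by simp
  have "w \<noteq> z" "w \<noteq> cnj z" using distinct by auto
  with root_disc_two_conj_pairs[OF \<open>Im z \<noteq> 0\<close> \<open>Im w \<noteq> 0\<close>, of a]
  show "Re (root_disc xs) > 0" using root_disc_mset_eq[of ?ys xs] xs by simp
  show "\<not> (L3 p q r s t > 0 \<and> L2 p q r s t > 0 \<and> L1 p q r s t > 0)"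
    using quintic_hankel_not_pos_def_if_one_real_root[OF complex_root_list_mset[OF roots]] xs
    by (simp add: quintic_hankel_pos_def_iff)
qed

theorem mainTheorem1:
  fixes p q r s t :: real
  defines "f \<equiv> quintic p q r s t"
      and "D \<equiv> quintic_disc p q r s t"
  shows "(card (real_roots f) = 5 \<longleftrightarrow>
            L3 p q r s t > 0 \<and> L2 p q r s t > 0 \<and> L1 p q r s t > 0 \<and> D > 0)
       \<and> ((card (real_roots f) = 3 \<and> (\<exists>z. Im z \<noteq> 0 \<and> nonreal_roots f = {z, cnj z})) \<longleftrightarrow> D < 0)
       \<and> ((card (real_roots f) = 1 \<and> card (nonreal_roots f) = 4) \<longleftrightarrow>
            D > 0 \<and> (L3 p q r s t \<le> 0 \<or> L2 p q r s t \<le> 0 \<or> L1 p q r s t \<le> 0))"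
proof -
  define xs where "xs = quintic_roots p q r s t"
  have roots: "complex_root_list (quintic p q r s t) xs"
    unfolding xs_def by (rule complex_root_list_quintic_roots)
  have D: "D = Re (root_disc xs)" by (simp add: D_def quintic_disc_def xs_def)
  show ?thesis
  proof (cases "distinct xs")
    case False
    have "card {z, cnj z} = 2" if "Im z \<noteq> 0" for z using that by (simp add: complex_eq_iff)
    then show ?thesis using quintic_repeated_root[OF roots False] by (auto simp: D f_def)
  next
    case True
    moreover have "length xs = 5" using roots by (rule quintic_root_list_length)
    moreover have "\<forall>z\<in>set xs. cnj z \<in> set xs" using complex_root_list_cnj[OF roots] by blast
    ultimately show ?thesis
    proof (cases rule: conj_closed_distinct_list_cases)
      case (five_real a b c d e)
      then show ?thesis using quintic_five_real_roots[OF roots True five_real] by (simp add: D f_def)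
    next
      case (three_real a b c z)
      then show ?thesis using quintic_three_real_roots[OF roots True three_real] by (auto simp: D f_def)
    next
      case (one_real a z w)
      then show ?thesis using quintic_one_real_root[OF roots True one_real] by (auto simp: D f_def)
    qed
  qed
qed

end
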